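(* Let $q$ be an odd prime power and $n=q^2+1$. For an integer $a$ with $1\le a\le n-1$, $a\in\mathrm{MinRep}_n$ if and only if either $a=\frac{q^2+1}{2}$ or $a\in[l(q+1)+1,(l+1)(q-1)]$ for some integer $l$ with $0\le l\le\frac{q-3}{2}$. Moreover, $|C_{(q^2+1)/2}|=1$ and $|C_a|=4$ for every $a\in\mathrm{MinRep}_n\setminus\{0,\frac{q^2+1}{2}\}$.
   Context: For $0\le s\le n-1$, $C_s=\{sq^i\bmod n:i\ge0\}$ is the $q$-cyclotomic coset of $s$ modulo $n$; its least element is its coset leader; $\mathrm{MinRep}_n$ is the set of all coset leaders modulo $n$. $[u,v]$ denotes the set of integers $u,u+1,\dots,v$. *)

theory Defs
  imports "HOL-Computational_Algebra.Primes"
begin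

definition cyc_coset :: "nat \<Rightarrow> nat \<Rightarrow> nat \<Rightarrow> nat set" where
  "cyc_coset q n s = {s * q ^ i mod n | i. True}"

definition MinRep :: "nat \<Rightarrow> nat \<Rightarrow> nat set" where
  "MinRep q n = {s. s < n \<and> s = Min (cyc_coset q n s)}"

end

theory Submission
  imports Defs
begin

text \<open>
  Modulo \<open>n = q\<^sup>2 + 1\<close> we have \<open>q\<^sup>2 \<equiv> -1\<close> and \<open>q ^ 4 \<equiv> 1\<close>, so for \<open>0 < a < n\<close> the coset
  of \<open>a\<close> is \<open>{a, b, n - a, n - b}\<close> with \<open>b = a q mod n\<close>, and \<open>a\<close> is its leader iff
  \<open>a \<le> b\<close> and \<open>a + b \<le> n\<close>. Writing \<open>a = x q + y\<close> with \<open>y < q\<close>, one gets \<open>b = y q - x\<close>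
  if \<open>y > 0\<close> (and \<open>n - b = x < a\<close> if \<open>y = 0\<close>), which turns the leader condition into
  \<open>x < y\<close> and \<open>x + y < q\<close>: \<open>a\<close> lies in the interval with \<open>l = x\<close>. The coset has four
  elements unless \<open>a q\<^sup>2 \<equiv> a\<close>, i.e. \<open>2 a = n\<close>, and \<open>n / 2\<close> is fixed by multiplication with
  the odd number \<open>q\<close>.
\<close>

lemma cyc_coset_eq_image_lessThan:
  assumes "0 < k" and "q ^ k mod n = 1"
  shows "cyc_coset q n s = (\<lambda>i. s * q ^ i mod n) ` {..<k}"
proof -
  have "s * q ^ i mod n = s * q ^ (i mod k) mod n" for i
  proof -
    have "q ^ i = q ^ (i mod k) * (q ^ k) ^ (i div k)"
      by (metis power_add power_mult mod_div_mult_eq mult.commute)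
    moreover have "(q ^ k) ^ (i div k) mod n = 1"
      using assms(2) by (metis power_mod power_one mod_mod_trivial)
    ultimately show ?thesis
      by (metis mod_mult_right_eq mult.assoc mult.right_neutral)
  qed
  moreover have "i mod k \<in> {..<k}" for i
    using assms(1) by simp
  ultimately show ?thesis
    unfolding cyc_coset_def by (auto simp del: lessThan_iff)
qed

lemma cyc_coset_eq_singleton:
  assumes "s * q mod n = s mod n"
  shows "cyc_coset q n s = {s mod n}"
proof -
  have "s * q ^ i mod n = s mod n" for i
  proof (induction i)
    case (Suc i)
    have "s * q ^ Suc i mod n = (s * q ^ i mod n) * q mod n"
      by (metis mod_mult_left_eq mult.assoc power_Suc2)
    also have "\<dots> = s mod n"
      using Suc assms by (simp add: mod_mult_left_eq)
    finally show ?case .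
  qed simp
  then show ?thesis
    unfolding cyc_coset_def by auto
qed

lemma card_cyc_coset_eq_4:
  assumes "q ^ 4 mod n = 1" and "s * q ^ 2 mod n \<noteq> s mod n"
  shows "card (cyc_coset q n s) = 4"
proof -
  define f where "f i = s * q ^ i mod n" for i
  have shift: "f (i + k) = f (j + k)" if "f i = f j" for i j k
    using that unfolding f_def by (metis mod_mult_left_eq mult.assoc power_add)
  have period: "f (i + 4) = f i" for i
  proof -
    have "s * q ^ (i + 4) mod n = s * q ^ i * (q ^ 4 mod n) mod n"
      unfolding power_add mult.assoc[symmetric] by (rule mod_mult_right_eq[symmetric])
    then show ?thesis
      using assms(1) unfolding f_def by simp
  qed
  have repeat: "f 0 = f (m * d)" if "f 0 = f d" for m d
  proof (induction m)
    case (Suc m)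
    then show ?case
      using shift[OF that, of "m * d"] by (simp add: add.commute)
  qed simp
  have "f 0 \<noteq> f 2"
    using assms(2) unfolding f_def by simp
  txt \<open>A coincidence \<open>f 0 = f d\<close> with \<open>d\<close> odd repeats to \<open>f 0 = f (2 * d) = f 2\<close> by periodicity.\<close>
  have f0_ne: "f 0 \<noteq> f d" if "d \<in> {1, 2, 3}" for d
  proof
    assume "f 0 = f d"
    moreover from this have "f 0 = f (2 * d)"
      by (rule repeat)
    moreover have "f d = f 2 \<or> f (2 * d) = f 2"
      using that period[of 2] by auto
    ultimately show False
      using \<open>f 0 \<noteq> f 2\<close> by auto
  qed
  have distinct: "f i \<noteq> f j" if "i < j" "j < 4" for i j
  proof
    assume "f i = f j"
    then have "f (i + (4 - i)) = f (j + (4 - i))"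
      by (rule shift)
    then have "f 0 = f (j - i)"
      using that period[of 0] period[of "j - i"] by (simp add: add.commute)
    moreover have "j - i \<in> {1, 2, 3}"
      using that by auto
    ultimately show False
      using f0_ne by blast
  qed
  have "inj_on f {..<4}"
    by (rule inj_onI) (metis lessThan_iff linorder_cases distinct)
  then show ?thesis
    using cyc_coset_eq_image_lessThan[OF _ assms(1)] unfolding f_def
    by (simp add: card_image)
qed

lemma mult_power2_mod_eq_diff:
  fixes q n c :: nat
  assumes "n = q\<^sup>2 + 1" and "0 < c" and "c < n"
  shows "c * q\<^sup>2 mod n = n - c"
proof -
  have "c * q\<^sup>2 = (c - 1) * n + (n - c)"
    using assms by (cases c) (auto simp: algebra_simps)
  moreover have "n - c < n"
    using assms by simp
  ultimately show ?thesis
    by (metis mod_less mod_mult_self3)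
qed

lemma power4_mod_eq_1:
  fixes q n :: nat
  assumes "n = q\<^sup>2 + 1" and "0 < q"
  shows "q ^ 4 mod n = 1"
proof -
  have "q ^ 4 = (n - 1) * q\<^sup>2"
    using assms(1) by (simp flip: power_add)
  then show ?thesis
    using mult_power2_mod_eq_diff[of n q "n - 1"] assms by simp
qed

lemma mult_mod_pos:
  fixes q n a :: nat
  assumes "n = q\<^sup>2 + 1" and "0 < a" and "a < n"
  shows "0 < a * q mod n"
proof (rule ccontr)
  have "coprime n q"
    using assms(1) by (metis coprime_add_one_left coprime_power_right_iff zero_neq_numeral)
  moreover assume "\<not> 0 < a * q mod n"
  ultimately have "n dvd a"
    by (simp add: coprime_dvd_mult_left_iff mod_eq_0_iff_dvd)
  then show False
    using assms(2,3) by (auto dest: dvd_imp_le)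
qed

lemma cyc_coset_eq:
  fixes q n a :: nat
  assumes "n = q\<^sup>2 + 1" and "0 < q" and "0 < a" and "a < n"
  defines "b \<equiv> a * q mod n"
  shows "cyc_coset q n a = {a, b, n - a, n - b}"
proof -
  have "0 < b" "b < n"
    using mult_mod_pos[OF assms(1,3,4)] assms(1) unfolding b_def by auto
  have "a * q ^ 3 mod n = b * q\<^sup>2 mod n"
    unfolding b_def by (simp add: mod_mult_left_eq power2_eq_square power3_eq_cube mult.assoc)
  also have "\<dots> = n - b"
    using mult_power2_mod_eq_diff[OF assms(1) \<open>0 < b\<close> \<open>b < n\<close>] .
  finally have "a * q ^ 3 mod n = n - b" .
  moreover have "a * q\<^sup>2 mod n = n - a"
    using mult_power2_mod_eq_diff[OF assms(1,3,4)] .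
  moreover have "{..<4::nat} = {0, 1, 2, 3}"
    by auto
  ultimately show ?thesis
    using cyc_coset_eq_image_lessThan[OF _ power4_mod_eq_1[OF assms(1,2)]] assms(4)
    by (simp add: b_def insert_commute)
qed

lemma MinRep_iff:
  fixes q n a :: nat
  assumes "n = q\<^sup>2 + 1" and "0 < q" and "0 < a" and "a < n"
  shows "a \<in> MinRep q n \<longleftrightarrow> a \<le> a * q mod n \<and> a + a * q mod n \<le> n"
proof -
  define b where "b = a * q mod n"
  have "b < n"
    using assms(4) unfolding b_def by simp
  have "a \<in> MinRep q n \<longleftrightarrow> a = Min {a, b, n - a, n - b}"
    using assms(4) by (simp add: MinRep_def cyc_coset_eq[OF assms] b_def)
  also have "\<dots> \<longleftrightarrow> a \<le> b \<and> a \<le> n - a \<and> a \<le> n - b"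
    by (auto simp: min_def)
  also have "\<dots> \<longleftrightarrow> a \<le> b \<and> a + b \<le> n"
    using \<open>b < n\<close> by linarith
  finally show ?thesis
    unfolding b_def .
qed

lemma half_mult_mod_eq:
  fixes q n :: nat
  assumes "n = q\<^sup>2 + 1" and "odd q"
  shows "n div 2 * q mod n = n div 2"
proof -
  obtain k where q: "q = 2 * k + 1"
    using assms(2) oddE by blast
  have "n = 2 * (n div 2)"
    using assms(1) q by (simp add: power2_eq_square algebra_simps)
  then have "n div 2 * q = n div 2 + k * n"
    using q by (simp add: algebra_simps)
  moreover have "n div 2 < n"
    using assms(1) by simp
  ultimately show ?thesis
    by simp
qed

lemma cyc_coset_half:
  fixes q n :: nat
  assumes "n = q\<^sup>2 + 1" and "odd q"
  shows "cyc_coset q n (n div 2) = {n div 2}"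
  using cyc_coset_eq_singleton[of "n div 2" q n] half_mult_mod_eq[OF assms] assms(1) by simp

lemma half_in_MinRep:
  fixes q n :: nat
  assumes "n = q\<^sup>2 + 1" and "odd q"
  shows "n div 2 \<in> MinRep q n"
  using cyc_coset_half[OF assms] assms(1) by (simp add: MinRep_def)

lemma mult_mod_eq_digits:
  fixes q n a x y :: nat
  assumes "n = q\<^sup>2 + 1" and "a = x * q + y" and "0 < y" and "y < q" and "a < n"
  shows "a * q mod n = y * q - x"
proof -
  have "x < q"
  proof (rule ccontr)
    assume "\<not> x < q"
    then have "q * q \<le> x * q"
      by simp
    then show False
      using assms unfolding power2_eq_square by linarith
  qed
  moreover have "q \<le> y * q"
    using assms(3) by simp
  ultimately have "x \<le> y * q"
    by linarith
  have "y * q \<le> q * q"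
    using assms(4) by simp
  then have "y * q - x < n"
    using assms(1) unfolding power2_eq_square by linarith
  have "a * q = x * (n - 1) + y * q"
    using assms(1,2) by (simp add: power2_eq_square algebra_simps)
  also have "\<dots> = x * n + (y * q - x)"
    using \<open>x \<le> y * q\<close> assms(1) by (simp add: diff_mult_distrib2)
  finally show ?thesis
    using \<open>y * q - x < n\<close> by simp
qed

lemma digits_leader_iff:
  fixes q x y :: nat
  assumes "0 < y" and "y < q" and "2 * (x * q + y) \<noteq> q\<^sup>2 + 1"
  shows "x * q + y \<le> y * q - x \<and> x * q + y + (y * q - x) \<le> q\<^sup>2 + 1 \<longleftrightarrow> x < y \<and> x + y < q"
proof
  assume "x * q + y \<le> y * q - x \<and> x * q + y + (y * q - x) \<le> q\<^sup>2 + 1"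
  moreover from this have "x \<le> y * q"
    using assms(1) by linarith
  ultimately have le: "x * q + y + x \<le> y * q" and sum: "x * q + y * q + y \<le> q * q + 1 + x"
    unfolding power2_eq_square by linarith+
  have "x < y"
  proof (rule ccontr)
    assume "\<not> x < y"
    then have "y * q \<le> x * q"
      by simp
    then show False
      using le assms(1) by linarith
  qed
  then have "(x + y) * q \<le> q * q"
    using sum by (simp add: algebra_simps)
  then have "x + y \<le> q"
    using assms(2) by simp
  moreover have "x + y \<noteq> q"
  proof
    assume q: "x + y = q"
    then have "x * q + y * q = q * q"
      by (simp flip: add_mult_distrib)
    then have "y = x + 1"
      using sum \<open>x < y\<close> by linarith
    moreover from this have "q = 2 * x + 1"
      using q by simp
    ultimately have "2 * (x * q + y) = q\<^sup>2 + 1"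
      by (simp add: power2_eq_square algebra_simps)
    with assms(3) show False
      by contradiction
  qed
  ultimately show "x < y \<and> x + y < q"
    using \<open>x < y\<close> by simp
next
  assume digits: "x < y \<and> x + y < q"
  then have "x + 1 \<le> y" and "x + y + 1 \<le> q"
    by simp_all
  then have "(x + 1) * q \<le> y * q" and "(x + y + 1) * q \<le> q * q"
    using mult_le_mono1 by blast+
  then show "x * q + y \<le> y * q - x \<and> x * q + y + (y * q - x) \<le> q\<^sup>2 + 1"
    using digits unfolding power2_eq_square by (simp add: algebra_simps) linarith
qed

lemma MinRep_iff_digits:
  fixes q n a :: nat
  assumes "n = q\<^sup>2 + 1" and "2 \<le> q" and "0 < a" and "a < n" and "2 * a \<noteq> n"
  shows "a \<in> MinRep q n \<longleftrightarrow> a div q < a mod q \<and> a div q + a mod q < q"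
proof (cases "a mod q = 0")
  case True
  define x where "x = a div q"
  have a: "a = x * q"
    using True unfolding x_def by (metis add_0_right div_mult_mod_eq)
  then have "0 < x" and "x < a"
    using assms(2,3) by auto
  then have "a * q mod n = n - x"
    using mult_power2_mod_eq_diff[OF assms(1), of x] assms(4) a \<open>x < a\<close>
    by (simp add: power2_eq_square mult.assoc)
  then have "\<not> a + a * q mod n \<le> n"
    using \<open>x < a\<close> assms(4) by linarith
  then have "a \<notin> MinRep q n"
    using MinRep_iff[OF assms(1) _ assms(3,4)] assms(2) by simp
  then show ?thesis
    using True by simp
next
  case False
  define x y where "x = a div q" and "y = a mod q"
  have a: "a = x * q + y"
    unfolding x_def y_def by simp
  have "0 < y" and "y < q"
    using False assms(2) unfolding y_def by simp_all
  have "a \<in> MinRep q n \<longleftrightarrow> a \<le> y * q - x \<and> a + (y * q - x) \<le> n"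
    using MinRep_iff[OF assms(1) _ assms(3,4)] mult_mod_eq_digits[OF assms(1) a \<open>0 < y\<close> \<open>y < q\<close> assms(4)]
      assms(2) by simp
  also have "\<dots> \<longleftrightarrow> x < y \<and> x + y < q"
    using digits_leader_iff[OF \<open>0 < y\<close> \<open>y < q\<close>] assms(1,5) a by simp
  finally show ?thesis
    unfolding x_def y_def .
qed

lemma interval_iff_digits:
  fixes q a :: nat
  assumes "odd q"
  shows "(\<exists>l. l \<le> (q - 3) div 2 \<and> l * (q + 1) + 1 \<le> a \<and> a \<le> (l + 1) * (q - 1)) \<longleftrightarrow>
    a div q < a mod q \<and> a div q + a mod q < q"
proof -
  have upper: "(l + 1) * (q - 1) + (l + 1) = l * q + q" for l
    using assms by (cases q) (auto simp: algebra_simps)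
  show ?thesis
  proof
    assume "\<exists>l. l \<le> (q - 3) div 2 \<and> l * (q + 1) + 1 \<le> a \<and> a \<le> (l + 1) * (q - 1)"
    then obtain l where "l \<le> (q - 3) div 2" "l * q + l + 1 \<le> a" "a + l + 1 \<le> l * q + q"
      using upper[of l] by (auto simp: algebra_simps)
    moreover define y where "y = a - l * q"
    ultimately have "a = l * q + y" "l < y" "l + y < q"
      by linarith+
    then show "a div q < a mod q \<and> a div q + a mod q < q"
      by simp
  next
    assume "a div q < a mod q \<and> a div q + a mod q < q"
    moreover define x y where "x = a div q" and "y = a mod q"
    ultimately have "x < y" "x + y < q" and a: "a = x * q + y"
      by simp_all
    then have "x \<le> (q - 3) div 2"
      using assms by presburger
    moreover have "x * (q + 1) + 1 \<le> a" "a \<le> (x + 1) * (q - 1)"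
      using \<open>x < y\<close> \<open>x + y < q\<close> upper[of x] a by (simp_all add: algebra_simps)
    ultimately show "\<exists>l. l \<le> (q - 3) div 2 \<and> l * (q + 1) + 1 \<le> a \<and> a \<le> (l + 1) * (q - 1)"
      by blast
  qed
qed

theorem lemma11:
  fixes q n :: nat
  assumes "\<exists>p k. prime p \<and> k \<ge> 1 \<and> q = p ^ k"
    and "odd q"
    and "n = q\<^sup>2 + 1"
  shows "(\<forall>a. 1 \<le> a \<and> a \<le> n - 1 \<longrightarrow>
            (a \<in> MinRep q n \<longleftrightarrow>
               a = (q\<^sup>2 + 1) div 2 \<or>
               (\<exists>l::nat. l \<le> (q - 3) div 2 \<and> l * (q + 1) + 1 \<le> a \<and> a \<le> (l + 1) * (q - 1))))
         \<and> card (cyc_coset q n ((q\<^sup>2 + 1) div 2)) = 1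
         \<and> (\<forall>a \<in> MinRep q n - {0, (q\<^sup>2 + 1) div 2}. card (cyc_coset q n a) = 4)"
proof -
  obtain p k where "prime p" and "k \<ge> 1" and "q = p ^ k"
    using assms(1) by blast
  then have "2 \<le> q"
    using prime_ge_2_nat[of p] self_le_power[of p k] by simp
  have n_even: "n = 2 * (n div 2)"
    using assms(2,3) by simp
  have leaders: "a \<in> MinRep q n \<longleftrightarrow> a = n div 2 \<or>
      (\<exists>l. l \<le> (q - 3) div 2 \<and> l * (q + 1) + 1 \<le> a \<and> a \<le> (l + 1) * (q - 1))"
    if "1 \<le> a" and "a \<le> n - 1" for a
  proof (cases "2 * a = n")
    case True
    then show ?thesis
      using half_in_MinRep[OF assms(3,2)] by auto
  next
    case False
    have "0 < a" and "a < n" and "a \<noteq> n div 2"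
      using that False n_even assms(3) by auto
    then show ?thesis
      using MinRep_iff_digits[OF assms(3) \<open>2 \<le> q\<close> _ _ False] interval_iff_digits[OF assms(2)] by simp
  qed
  have "card (cyc_coset q n a) = 4" if "a \<in> MinRep q n - {0, n div 2}" for a
  proof -
    have "0 < a" and "a < n" and "2 * a \<noteq> n"
      using that n_even by (auto simp: MinRep_def)
    then have "a * q\<^sup>2 mod n \<noteq> a mod n"
      using mult_power2_mod_eq_diff[OF assms(3)] by simp
    then show ?thesis
      using card_cyc_coset_eq_4 power4_mod_eq_1[OF assms(3)] \<open>2 \<le> q\<close> by simp
  qed
  then show ?thesis
    using leaders cyc_coset_half[OF assms(3,2)] unfolding assms(3)[symmetric] by simp
qed

end
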